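(* Let $p$ be an odd prime. Then the edge set of the complete graph $K_{p^4}$ can be partitioned into $(p^4-1)/4$ subgraphs, each isomorphic to $C_{p^2} \square C_{p^2}$.
   Context: $C_n$ denotes the cycle graph on $n$ vertices and $K_m$ the complete graph on $m$ vertices. For graphs $G=(V,E)$ and $G'=(V',E')$, the Cartesian product $G \square G'$ has vertex set $V\times V'$, with $\{(v,v'),(w,w')\}$ an edge iff either $\{v,w\}\in E$ and $v'=w'$, or $v=w$ and $\{v',w'\}\in E'$. Partitioning $K_m$ into copies of $G$ means decomposing its edge set into edge-disjoint subgraphs (on the vertex set of $K_m$) each isomorphic to $G$. *)

theory Defs
  imports "HOL-Computational_Algebra.Primes"
begin

text \<open>A simple graph is a pair (vertex set, set of edges), each edge a 2-element set.\<close>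
type_synonym 'a sgraph = "'a set \<times> 'a set set"

definition verts :: "'a sgraph \<Rightarrow> 'a set" where "verts G = fst G"
definition edges :: "'a sgraph \<Rightarrow> 'a set set" where "edges G = snd G"

text \<open>Cycle C_n on vertices 0..n-1 (meaningful for n >= 3).\<close>
definition cycle_graph :: "nat \<Rightarrow> nat sgraph" where
  "cycle_graph n = ({0..<n}, {{i, (i + 1) mod n} | i. i < n})"

definition complete_graph :: "nat \<Rightarrow> nat sgraph" where
  "complete_graph m = ({0..<m}, {{u, v} | u v. u < m \<and> v < m \<and> u \<noteq> v})"

definition cart_prod :: "'a sgraph \<Rightarrow> 'b sgraph \<Rightarrow> ('a \<times> 'b) sgraph" where
  "cart_prod G H = (verts G \<times> verts H,
     {{(v, x), (w, x)} | v w x. {v, w} \<in> edges G \<and> x \<in> verts H} \<union>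
     {{(v, x), (v, y)} | v x y. v \<in> verts G \<and> {x, y} \<in> edges H})"

definition is_copy :: "'b sgraph \<Rightarrow> 'a sgraph \<Rightarrow> 'a set set \<Rightarrow> bool" where
  "is_copy G K E \<longleftrightarrow> (\<exists>f. inj_on f (verts G) \<and> f ` verts G \<subseteq> verts K \<and>
                          E = (\<lambda>e. f ` e) ` edges G)"

definition edge_partition_into :: "'a sgraph \<Rightarrow> 'b sgraph \<Rightarrow> nat \<Rightarrow> bool" where
  "edge_partition_into K G k \<longleftrightarrow>
     (\<exists>F :: nat \<Rightarrow> 'a set set.
        (\<forall>i<k. is_copy G K (F i)) \<and>
        (\<forall>i<k. \<forall>j<k. i \<noteq> j \<longrightarrow> F i \<inter> F j = {}) \<and>
        (\<Union>i<k. F i) = edges K)"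

end

theory Submission
  imports Defs "HOL-Number_Theory.Residues"
begin

text \<open>Let F be a field of odd order q; here F = Z_p(\<surd>d) for a non-square d mod p, so q = p^2.
  Identify the vertices of K_{q^2} with the points of the affine plane F^2. Two distinct points
  lie on exactly one line, and the lines fall into q + 1 parallel classes. Pairing the classes into
  (q + 1)/2 pairs, each pair {d, d'} spans a copy of the rook's graph K_q \<box> K_q whose rows are the
  lines of direction d and whose columns are the lines of direction d'; these copies partition the
  edges of K_{q^2}. Walecki's decomposition of K_q into (q - 1)/2 Hamiltonian cycles H_k splits
  K_q \<box> K_q into the tori H_k \<box> H_k, which gives (q + 1)(q - 1)/4 = (p^4 - 1)/4 copies of
  C_{p^2} \<box> C_{p^2}.\<close>

section \<open>Edge partitions of simple graphs\<close>

definition simple_graph :: "'a sgraph \<Rightarrow> bool" where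
  "simple_graph G \<longleftrightarrow> (\<forall>E\<in>edges G. \<exists>u\<in>verts G. \<exists>v\<in>verts G. u \<noteq> v \<and> E = {u, v})"

definition complete_graph_on :: "'a set \<Rightarrow> 'a sgraph" where
  "complete_graph_on V = (V, {{u, v} | u v. u \<in> V \<and> v \<in> V \<and> u \<noteq> v})"

lemma verts_complete_graph_on [simp]: "verts (complete_graph_on V) = V"
  by (simp add: verts_def complete_graph_on_def)

lemma edges_complete_graph_on: "edges (complete_graph_on V) = {{u, v} | u v. u \<in> V \<and> v \<in> V \<and> u \<noteq> v}"
  by (simp add: edges_def complete_graph_on_def)

lemma complete_graph_eq_complete_graph_on: "complete_graph n = complete_graph_on {0..<n}"
  by (simp add: complete_graph_def complete_graph_on_def)

lemma verts_complete_graph [simp]: "verts (complete_graph n) = {0..<n}"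
  by (simp add: complete_graph_eq_complete_graph_on)

abbreviation rook_graph :: "nat \<Rightarrow> (nat \<times> nat) sgraph" where
  "rook_graph n \<equiv> cart_prod (complete_graph n) (complete_graph n)"

lemma verts_cycle_graph [simp]: "verts (cycle_graph n) = {0..<n}"
  by (simp add: verts_def cycle_graph_def)

lemma edges_cycle_graph: "edges (cycle_graph n) = {{a, Suc a mod n} | a. a < n}"
  by (simp add: edges_def cycle_graph_def)

lemma verts_cart_prod [simp]: "verts (cart_prod G H) = verts G \<times> verts H"
  by (simp add: verts_def cart_prod_def)

lemma simple_graph_complete_graph_on: "simple_graph (complete_graph_on V)"
  by (auto simp: simple_graph_def edges_complete_graph_on)

lemma simple_graph_complete_graph: "simple_graph (complete_graph n)"
  by (simp add: complete_graph_eq_complete_graph_on simple_graph_complete_graph_on)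

lemma simple_graph_cycle_graph:
  assumes "3 \<le> n"
  shows "simple_graph (cycle_graph n)"
proof -
  have "a \<noteq> Suc a mod n" if "a < n" for a
    using that assms by (cases "Suc a = n") auto
  then show ?thesis
    by (fastforce simp: simple_graph_def edges_cycle_graph)
qed

lemma simple_graph_edge:
  assumes "simple_graph G" "E \<in> edges G"
  obtains u v where "u \<in> verts G" "v \<in> verts G" "u \<noteq> v" "E = {u, v}"
  using assms unfolding simple_graph_def by blast

lemma edges_cart_prod:
  assumes "simple_graph G" "simple_graph H"
  shows "edges (cart_prod G H) =
    {E \<times> {x} | E x. E \<in> edges G \<and> x \<in> verts H} \<union> {{v} \<times> E | v E. v \<in> verts G \<and> E \<in> edges H}"
proof -
  have "{{(v, x), (w, x)} | v w x. {v, w} \<in> edges G \<and> x \<in> verts H} =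
      {E \<times> {x} | E x. E \<in> edges G \<and> x \<in> verts H}"
  proof (intro equalityI subsetI)
    fix T assume "T \<in> {E \<times> {x} | E x. E \<in> edges G \<and> x \<in> verts H}"
    then obtain E x where "T = E \<times> {x}" "E \<in> edges G" "x \<in> verts H" by blast
    moreover from assms(1) \<open>E \<in> edges G\<close> obtain u v where "E = {u, v}"
      by (auto elim: simple_graph_edge)
    ultimately show "T \<in> {{(v, x), (w, x)} | v w x. {v, w} \<in> edges G \<and> x \<in> verts H}"
      by blast
  qed blast
  moreover have "{{(v, x), (v, y)} | v x y. v \<in> verts G \<and> {x, y} \<in> edges H} =
      {{v} \<times> E | v E. v \<in> verts G \<and> E \<in> edges H}"
  proof (intro equalityI subsetI)
    fix T assume "T \<in> {{v} \<times> E | v E. v \<in> verts G \<and> E \<in> edges H}"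
    then obtain E v where "T = {v} \<times> E" "E \<in> edges H" "v \<in> verts G" by blast
    moreover from assms(2) \<open>E \<in> edges H\<close> obtain x y where "E = {x, y}"
      by (auto elim: simple_graph_edge)
    ultimately show "T \<in> {{(v, x), (v, y)} | v x y. v \<in> verts G \<and> {x, y} \<in> edges H}"
      by blast
  qed blast
  ultimately show ?thesis
    by (simp add: cart_prod_def edges_def[of "(_, _)"])
qed

lemma simple_graph_cart_prod:
  assumes "simple_graph G" "simple_graph H"
  shows "simple_graph (cart_prod G H)"
  unfolding simple_graph_def edges_cart_prod[OF assms] verts_cart_prod
proof (intro ballI, elim UnE CollectE exE conjE)
  fix T E x assume "T = E \<times> {x}" "E \<in> edges G" "x \<in> verts H"
  with assms(1) show "\<exists>u\<in>verts G \<times> verts H. \<exists>v\<in>verts G \<times> verts H. u \<noteq> v \<and> T = {u, v}"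
    by (elim simple_graph_edge) auto
next
  fix T E v assume "T = {v} \<times> E" "E \<in> edges H" "v \<in> verts G"
  with assms(2) show "\<exists>u\<in>verts G \<times> verts H. \<exists>w\<in>verts G \<times> verts H. u \<noteq> w \<and> T = {u, w}"
    by (elim simple_graph_edge) auto
qed

lemma edge_partition_intoI:
  assumes "\<And>k. k < l \<Longrightarrow> is_copy G K (C k)"
    and "\<And>k. k < l \<Longrightarrow> C k \<subseteq> edges K"
    and "\<And>E. E \<in> edges K \<Longrightarrow> \<exists>!k. k < l \<and> E \<in> C k"
  shows "edge_partition_into K G l"
  unfolding edge_partition_into_def
proof (intro exI[of _ C] conjI allI impI)
  fix i j assume ij: "i < l" "j < l" "i \<noteq> j"
  show "C i \<inter> C j = {}"
  proof (intro equalityI subsetI)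
    fix E assume "E \<in> C i \<inter> C j"
    with ij assms(2) have "E \<in> edges K" "E \<in> C i" "E \<in> C j" by auto
    then have "i = j"
      using ij the1_equality[OF assms(3)] by (metis (no_types, lifting))
    with ij show "E \<in> {}" by simp
  qed simp
next
  show "(\<Union>k<l. C k) = edges K"
  proof (intro equalityI subsetI)
    fix E assume "E \<in> edges K"
    then obtain k where "k < l" "E \<in> C k"
      using assms(3)[OF \<open>E \<in> edges K\<close>] by auto
    then show "E \<in> (\<Union>k<l. C k)" by blast
  qed (use assms(2) in blast)
qed (fact assms(1))

lemma edge_partition_into_bij:
  assumes "bij_betw f V W"
  shows "edge_partition_into (complete_graph_on W) (complete_graph_on V) 1"
proof (rule edge_partition_intoI[where C = "\<lambda>_. edges (complete_graph_on W)"])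
  have "edges (complete_graph_on W) = (\<lambda>E. f ` E) ` edges (complete_graph_on V)"
  proof (intro equalityI subsetI)
    fix E assume "E \<in> edges (complete_graph_on W)"
    then obtain x y where "E = {x, y}" "x \<in> W" "y \<in> W" "x \<noteq> y"
      unfolding edges_complete_graph_on by blast
    moreover obtain u v where "u \<in> V" "v \<in> V" "x = f u" "y = f v"
      using assms \<open>x \<in> W\<close> \<open>y \<in> W\<close> unfolding bij_betw_def by blast
    ultimately have "E = f ` {u, v}" "{u, v} \<in> edges (complete_graph_on V)"
      unfolding edges_complete_graph_on by auto
    then show "E \<in> (\<lambda>E. f ` E) ` edges (complete_graph_on V)"
      by (rule image_eqI)
  next
    fix E assume "E \<in> (\<lambda>E. f ` E) ` edges (complete_graph_on V)"
    then obtain u v where "E = f ` {u, v}" "u \<in> V" "v \<in> V" "u \<noteq> v"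
      unfolding edges_complete_graph_on by blast
    moreover have "f u \<noteq> f v" "f u \<in> W" "f v \<in> W"
      using assms calculation(2-4) by (auto simp: bij_betw_def inj_on_def)
    ultimately show "E \<in> edges (complete_graph_on W)"
      unfolding edges_complete_graph_on by auto
  qed
  then show "is_copy (complete_graph_on V) (complete_graph_on W) (edges (complete_graph_on W))"
    unfolding is_copy_def using assms by (intro exI[of _ f]) (simp add: bij_betw_def)
qed simp_all

lemma edge_partition_intoE:
  assumes "edge_partition_into K G l"
  obtains F f where "\<And>i. i < l \<Longrightarrow> inj_on (f i) (verts G)" "\<And>i. i < l \<Longrightarrow> f i ` verts G \<subseteq> verts K"
    and "\<And>i. i < l \<Longrightarrow> F i = (\<lambda>E. f i ` E) ` edges G"
    and "\<And>i j. i < l \<Longrightarrow> j < l \<Longrightarrow> i \<noteq> j \<Longrightarrow> F i \<inter> F j = {}"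
    and "(\<Union>i<l. F i) = edges K"
proof -
  obtain F where F_copy: "\<And>i. i < l \<Longrightarrow> is_copy G K (F i)"
    and "\<And>i j. i < l \<Longrightarrow> j < l \<Longrightarrow> i \<noteq> j \<Longrightarrow> F i \<inter> F j = {}"
    and "(\<Union>i<l. F i) = edges K"
    using assms unfolding edge_partition_into_def by metis
  moreover have "\<forall>i. \<exists>f. i < l \<longrightarrow> inj_on f (verts G) \<and> f ` verts G \<subseteq> verts K \<and>
      F i = (\<lambda>E. f ` E) ` edges G"
    using F_copy unfolding is_copy_def by metis
  then obtain f where "\<And>i. i < l \<Longrightarrow> inj_on (f i) (verts G) \<and> f i ` verts G \<subseteq> verts K \<and>
      F i = (\<lambda>E. f i ` E) ` edges G"
    by metis
  ultimately show ?thesis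
    using that by metis
qed

lemma edge_partition_into_image:
  assumes "simple_graph H" "inj_on \<phi> (verts H)" "\<phi> ` verts H \<subseteq> W"
    and "edge_partition_into H G l"
  shows "edge_partition_into (W, (\<lambda>E. \<phi> ` E) ` edges H) G l"
proof -
  obtain F f where f: "\<And>j. j < l \<Longrightarrow> inj_on (f j) (verts G)" "\<And>j. j < l \<Longrightarrow> f j ` verts G \<subseteq> verts H"
    and F: "\<And>j. j < l \<Longrightarrow> F j = (\<lambda>E. f j ` E) ` edges G"
    and F_disj: "\<And>i j. i < l \<Longrightarrow> j < l \<Longrightarrow> i \<noteq> j \<Longrightarrow> F i \<inter> F j = {}"
    and F_union: "(\<Union>j<l. F j) = edges H"
    using edge_partition_intoE[OF assms(4)] by metis
  have "edges H \<subseteq> Pow (verts H)"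
    using assms(1) by (auto simp: simple_graph_def)
  then have inj: "inj_on (image \<phi>) (edges H)"
    by (rule inj_on_subset[OF inj_on_image_Pow[OF assms(2)]])
  show ?thesis
  proof (rule edge_partition_intoI[where C = "\<lambda>j. (\<lambda>E. \<phi> ` E) ` F j"])
    fix j assume j: "j < l"
    have "(\<lambda>E. \<phi> ` E) ` F j = (\<lambda>E. (\<phi> \<circ> f j) ` E) ` edges G"
      by (simp add: F[OF j] image_image image_comp)
    moreover have "inj_on (\<phi> \<circ> f j) (verts G)"
      using f[OF j] assms(2) by (blast intro: comp_inj_on inj_on_subset)
    moreover have "(\<phi> \<circ> f j) ` verts G \<subseteq> W"
      using f(2)[OF j] assms(3) by (auto simp: image_subset_iff)
    ultimately show "is_copy G (W, (\<lambda>E. \<phi> ` E) ` edges H) ((\<lambda>E. \<phi> ` E) ` F j)"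
      unfolding is_copy_def verts_def by (intro exI[of _ "\<phi> \<circ> f j"]) simp
    have "F j \<subseteq> edges H"
      using F_union j by blast
    then show "(\<lambda>E. \<phi> ` E) ` F j \<subseteq> edges (W, (\<lambda>E. \<phi> ` E) ` edges H)"
      unfolding edges_def snd_conv by (rule image_mono)
  next
    fix E assume "E \<in> edges (W, (\<lambda>E. \<phi> ` E) ` edges H)"
    then obtain E' where E': "E' \<in> edges H" "E = \<phi> ` E'"
      unfolding edges_def snd_conv by (rule imageE)
    then obtain j where j: "j < l" "E' \<in> F j"
      using F_union by blast
    show "\<exists>!j. j < l \<and> E \<in> (\<lambda>E. \<phi> ` E) ` F j"
    proof (rule ex1I[of _ j])
      show "j < l \<and> E \<in> (\<lambda>E. \<phi> ` E) ` F j"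
        using j E'(2) by simp
    next
      fix j' assume "j' < l \<and> E \<in> (\<lambda>E. \<phi> ` E) ` F j'"
      then obtain E'' where E'': "j' < l" "E'' \<in> F j'" "E = \<phi> ` E''"
        by auto
      then have "E'' \<in> edges H"
        using F_union by blast
      then have "E'' = E'"
        using inj_onD[OF inj, of E'' E'] E' E''(3) by simp
      then have "j' < l" "E' \<in> F j'"
        using E'' by simp_all
      then show "j' = j"
        using F_disj[of j' j] j by blast
    qed
  qed
qed

lemma edge_partition_into_concat:
  assumes parts: "\<And>i. i < k \<Longrightarrow> edge_partition_into (verts K, F i) G l"
    and F_disj: "\<And>i j. i < k \<Longrightarrow> j < k \<Longrightarrow> i \<noteq> j \<Longrightarrow> F i \<inter> F j = {}"
    and F_union: "(\<Union>i<k. F i) = edges K"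
  shows "edge_partition_into K G (k * l)"
proof -
  have "\<forall>i. \<exists>P. i < k \<longrightarrow> (\<forall>j<l. is_copy G (verts K, F i) (P j)) \<and>
      (\<forall>j<l. \<forall>j'<l. j \<noteq> j' \<longrightarrow> P j \<inter> P j' = {}) \<and> (\<Union>j<l. P j) = F i"
    using parts unfolding edge_partition_into_def edges_def by auto
  then obtain P where P_copy: "\<And>i j. i < k \<Longrightarrow> j < l \<Longrightarrow> is_copy G K (P i j)"
    and P_disj: "\<And>i j j'. i < k \<Longrightarrow> j < l \<Longrightarrow> j' < l \<Longrightarrow> j \<noteq> j' \<Longrightarrow> P i j \<inter> P i j' = {}"
    and P_union: "\<And>i. i < k \<Longrightarrow> (\<Union>j<l. P i j) = F i"
    unfolding is_copy_def verts_def by (metis fst_conv)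
  have index: "n div l < k" "n mod l < l" if "n < k * l" for n
  proof -
    have "0 < l"
      using that by (cases l) auto
    then show "n div l < k" "n mod l < l"
      using that by (simp_all add: less_mult_imp_div_less)
  qed
  show ?thesis
  proof (rule edge_partition_intoI[where C = "\<lambda>n. P (n div l) (n mod l)"])
    fix n assume "n < k * l"
    then show "is_copy G K (P (n div l) (n mod l))" "P (n div l) (n mod l) \<subseteq> edges K"
      using P_copy index P_union F_union by blast+
  next
    fix E assume "E \<in> edges K"
    then obtain i j where ij: "i < k" "j < l" "E \<in> P i j"
      using F_union P_union by blast
    show "\<exists>!n. n < k * l \<and> E \<in> P (n div l) (n mod l)"
    proof (rule ex1I[of _ "i * l + j"])
      have "i * l + j < Suc i * l"
        using ij(2) by simp
      also have "\<dots> \<le> k * l"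
        using ij(1) by (intro mult_le_mono1) simp
      finally show "i * l + j < k * l \<and> E \<in> P ((i * l + j) div l) ((i * l + j) mod l)"
        using ij by simp
    next
      fix n assume n: "n < k * l \<and> E \<in> P (n div l) (n mod l)"
      then have "n div l = i"
        using F_disj[of "n div l" i] P_union index ij by blast
      then have "n mod l = j"
        using P_disj[of i "n mod l" j] index n ij by blast
      then show "n = i * l + j"
        using \<open>n div l = i\<close> by (metis div_mult_mod_eq)
    qed
  qed
qed

lemma edge_partition_into_trans:
  assumes "simple_graph H" "edge_partition_into K H k" "edge_partition_into H G l"
  shows "edge_partition_into K G (k * l)"
proof -
  obtain F \<phi> where \<phi>: "\<And>i. i < k \<Longrightarrow> inj_on (\<phi> i) (verts H)" "\<And>i. i < k \<Longrightarrow> \<phi> i ` verts H \<subseteq> verts K"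
    and F: "\<And>i. i < k \<Longrightarrow> F i = (\<lambda>E. \<phi> i ` E) ` edges H"
    and "\<And>i j. i < k \<Longrightarrow> j < k \<Longrightarrow> i \<noteq> j \<Longrightarrow> F i \<inter> F j = {}" "(\<Union>i<k. F i) = edges K"
    using edge_partition_intoE[OF assms(2)] by metis
  moreover have "edge_partition_into (verts K, F i) G l" if "i < k" for i
    unfolding F[OF that] by (rule edge_partition_into_image[OF assms(1) \<phi>[OF that] assms(3)])
  ultimately show ?thesis
    by (intro edge_partition_into_concat) auto
qed

lemma edge_partition_into_spanning:
  assumes "finite (verts K)" "card (verts G) = card (verts K)"
    and "edge_partition_into K G l"
  obtains F f where "\<And>i. i < l \<Longrightarrow> bij_betw (f i) (verts G) (verts K)"
    and "\<And>i. i < l \<Longrightarrow> F i = (\<lambda>E. f i ` E) ` edges G"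
    and "\<And>i j. i < l \<Longrightarrow> j < l \<Longrightarrow> i \<noteq> j \<Longrightarrow> F i \<inter> F j = {}"
    and "(\<Union>i<l. F i) = edges K"
proof -
  obtain F f where f: "\<And>i. i < l \<Longrightarrow> inj_on (f i) (verts G)" "\<And>i. i < l \<Longrightarrow> f i ` verts G \<subseteq> verts K"
    and "\<And>i. i < l \<Longrightarrow> F i = (\<lambda>E. f i ` E) ` edges G"
    and "\<And>i j. i < l \<Longrightarrow> j < l \<Longrightarrow> i \<noteq> j \<Longrightarrow> F i \<inter> F j = {}" "(\<Union>i<l. F i) = edges K"
    using edge_partition_intoE[OF assms(3)] by metis
  moreover have "bij_betw (f i) (verts G) (verts K)" if "i < l" for i
  proof -
    have "card (f i ` verts G) = card (verts K)"
      using f[OF that] assms(2) by (simp add: card_image)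
    then have "f i ` verts G = verts K"
      using f[OF that] assms(1) by (simp add: card_subset_eq)
    then show ?thesis
      using f[OF that] unfolding bij_betw_def by simp
  qed
  ultimately show ?thesis
    using that by metis
qed

lemma card_edge_simple_graph: "simple_graph G \<Longrightarrow> E \<in> edges G \<Longrightarrow> card E = 2"
  by (auto elim: simple_graph_edge)

lemma image_edges_cart_prod:
  assumes simple: "simple_graph G" "simple_graph G'"
    and f: "bij_betw f (verts G) V" and f': "bij_betw f' (verts G') V'"
  shows "T \<in> (\<lambda>T. map_prod f f' ` T) ` edges (cart_prod G G') \<longleftrightarrow>
    (\<exists>E\<in>(\<lambda>E. f ` E) ` edges G. \<exists>y\<in>V'. T = E \<times> {y}) \<or> (\<exists>x\<in>V. \<exists>E\<in>(\<lambda>E. f' ` E) ` edges G'. T = {x} \<times> E)"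
proof
  assume "T \<in> (\<lambda>T. map_prod f f' ` T) ` edges (cart_prod G G')"
  then obtain T0 where T0: "T0 \<in> edges (cart_prod G G')" "T = map_prod f f' ` T0"
    by (rule imageE)
  from T0(1) consider E x where "E \<in> edges G" "x \<in> verts G'" "T0 = E \<times> {x}"
    | x E where "x \<in> verts G" "E \<in> edges G'" "T0 = {x} \<times> E"
    unfolding edges_cart_prod[OF simple] by blast
  then show "(\<exists>E\<in>(\<lambda>E. f ` E) ` edges G. \<exists>y\<in>V'. T = E \<times> {y}) \<or>
      (\<exists>x\<in>V. \<exists>E\<in>(\<lambda>E. f' ` E) ` edges G'. T = {x} \<times> E)"
  proof cases
    case (1 E x)
    then have "T = f ` E \<times> {f' x}" "f ` E \<in> (\<lambda>E. f ` E) ` edges G" "f' x \<in> V'"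
      using T0(2) f' by (auto simp: map_prod_surj_on bij_betw_apply)
    then show ?thesis
      by (intro disjI1 bexI[of _ "f ` E"] bexI[of _ "f' x"])
  next
    case (2 x E)
    then have "T = {f x} \<times> f' ` E" "f' ` E \<in> (\<lambda>E. f' ` E) ` edges G'" "f x \<in> V"
      using T0(2) f by (auto simp: map_prod_surj_on bij_betw_apply)
    then show ?thesis
      by (intro disjI2 bexI[of _ "f x"] bexI[of _ "f' ` E"])
  qed
next
  assume "(\<exists>E\<in>(\<lambda>E. f ` E) ` edges G. \<exists>y\<in>V'. T = E \<times> {y}) \<or>
      (\<exists>x\<in>V. \<exists>E\<in>(\<lambda>E. f' ` E) ` edges G'. T = {x} \<times> E)"
  then consider E0 y where "E0 \<in> edges G" "y \<in> V'" "T = f ` E0 \<times> {y}"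
    | x E0 where "x \<in> V" "E0 \<in> edges G'" "T = {x} \<times> f' ` E0"
    by blast
  then obtain T0 where "T0 \<in> edges (cart_prod G G')" "T = map_prod f f' ` T0"
  proof cases
    case (1 E0 y)
    moreover obtain x0 where "x0 \<in> verts G'" "y = f' x0"
      using 1(2) f' by (auto simp: bij_betw_def)
    ultimately show ?thesis
      by (intro that[of "E0 \<times> {x0}"]) (auto simp: edges_cart_prod[OF simple] map_prod_surj_on)
  next
    case (2 x E0)
    moreover obtain x0 where "x0 \<in> verts G" "x = f x0"
      using 2(1) f by (auto simp: bij_betw_def)
    ultimately show ?thesis
      by (intro that[of "{x0} \<times> E0"]) (auto simp: edges_cart_prod[OF simple] map_prod_surj_on)
  qed
  then show "T \<in> (\<lambda>T. map_prod f f' ` T) ` edges (cart_prod G G')"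
    by (rule image_eqI[rotated])
qed

lemma edge_partition_into_cart_prod:
  assumes simple: "simple_graph K" "simple_graph K'" "simple_graph G" "simple_graph G'"
    and "finite (verts K)" "finite (verts K')"
    and "card (verts G) = card (verts K)" "card (verts G') = card (verts K')"
    and "edge_partition_into K G l" "edge_partition_into K' G' l"
  shows "edge_partition_into (cart_prod K K') (cart_prod G G') l"
proof -
  obtain F f where f: "\<And>i. i < l \<Longrightarrow> bij_betw (f i) (verts G) (verts K)"
    and F: "\<And>i. i < l \<Longrightarrow> F i = (\<lambda>E. f i ` E) ` edges G"
    and F_disj: "\<And>i j. i < l \<Longrightarrow> j < l \<Longrightarrow> i \<noteq> j \<Longrightarrow> F i \<inter> F j = {}"
    and F_union: "(\<Union>i<l. F i) = edges K"
    using edge_partition_into_spanning[OF assms(5,7,9)] by metis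
  obtain F' f' where f': "\<And>i. i < l \<Longrightarrow> bij_betw (f' i) (verts G') (verts K')"
    and F': "\<And>i. i < l \<Longrightarrow> F' i = (\<lambda>E. f' i ` E) ` edges G'"
    and F'_disj: "\<And>i j. i < l \<Longrightarrow> j < l \<Longrightarrow> i \<noteq> j \<Longrightarrow> F' i \<inter> F' j = {}"
    and F'_union: "(\<Union>i<l. F' i) = edges K'"
    using edge_partition_into_spanning[OF assms(6,8,10)] by metis
  define C where "C i = (\<lambda>T. map_prod (f i) (f' i) ` T) ` edges (cart_prod G G')" for i
  have C_iff: "T \<in> C i \<longleftrightarrow> (\<exists>E\<in>F i. \<exists>y\<in>verts K'. T = E \<times> {y}) \<or> (\<exists>x\<in>verts K. \<exists>E\<in>F' i. T = {x} \<times> E)"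
    if "i < l" for i T
    unfolding C_def F[OF that] F'[OF that] using simple(3,4) f[OF that] f'[OF that]
    by (rule image_edges_cart_prod)
  have F_sub: "F i \<subseteq> edges K" "F' i \<subseteq> edges K'" if "i < l" for i
    using F_union F'_union that by blast+
  txt \<open>Rows and columns of a copy are told apart by the number of first coordinates of an edge.\<close>
  have slice: "card (fst ` T) = 2 \<and> fst ` T \<in> F i \<or> card (fst ` T) = 1 \<and> snd ` T \<in> F' i"
    if i: "i < l" and T: "T \<in> C i" for i T
  proof -
    from T consider E y where "E \<in> F i" "T = E \<times> {y}" | x E where "E \<in> F' i" "T = {x} \<times> E"
      unfolding C_iff[OF i] by blast
    then show ?thesis
    proof cases
      case (1 E y)
      moreover have "card E = 2"
        using card_edge_simple_graph[OF simple(1)] F_sub[OF i] 1(1) by blast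
      ultimately show ?thesis
        by simp
    next
      case (2 x E)
      moreover have "E \<noteq> {}"
        using card_edge_simple_graph[OF simple(2)] F_sub[OF i] 2(1) by fastforce
      ultimately show ?thesis
        by simp
    qed
  qed
  show ?thesis
  proof (rule edge_partition_intoI[where C = C])
    fix i assume i: "i < l"
    show "is_copy (cart_prod G G') (cart_prod K K') (C i)"
      unfolding is_copy_def verts_cart_prod
    proof (intro exI[of _ "map_prod (f i) (f' i)"] conjI)
      show "inj_on (map_prod (f i) (f' i)) (verts G \<times> verts G')"
        using f[OF i] f'[OF i] by (intro map_prod_inj_on) (auto simp: bij_betw_def)
      show "map_prod (f i) (f' i) ` (verts G \<times> verts G') \<subseteq> verts K \<times> verts K'"
        using f[OF i] f'[OF i] by (auto simp: bij_betw_def)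
    qed (simp add: C_def)
    show "C i \<subseteq> edges (cart_prod K K')"
    proof
      fix T assume "T \<in> C i"
      then show "T \<in> edges (cart_prod K K')"
        unfolding C_iff[OF i] edges_cart_prod[OF simple(1,2)] using F_sub[OF i] by blast
    qed
  next
    fix T assume "T \<in> edges (cart_prod K K')"
    then consider E y where "E \<in> edges K" "y \<in> verts K'" "T = E \<times> {y}"
      | x E where "x \<in> verts K" "E \<in> edges K'" "T = {x} \<times> E"
      unfolding edges_cart_prod[OF simple(1,2)] by blast
    then obtain i where i: "i < l" "T \<in> C i"
    proof cases
      case (1 E y)
      then obtain i where "i < l" "E \<in> F i"
        using F_union by blast
      with 1 show ?thesis
        using that C_iff by blast
    next
      case (2 x E)
      then obtain i where "i < l" "E \<in> F' i"
        using F'_union by blast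
      with 2 show ?thesis
        using that C_iff by blast
    qed
    show "\<exists>!i. i < l \<and> T \<in> C i"
    proof (rule ex1I[of _ i])
      fix j assume "j < l \<and> T \<in> C j"
      then show "j = i"
        using slice[of j T] slice[OF i] F_disj[of j i] F'_disj[of j i] i(1) by auto
    qed (use i in blast)
  qed
qed

section \<open>Walecki's decomposition of complete graphs into Hamiltonian cycles\<close>

lemma cong_abs_less_imp_eq_int:
  fixes a b m :: int
  assumes "[a = b] (mod m)" "\<bar>a - b\<bar> < m"
  shows "a = b"
proof (rule ccontr)
  assume "a \<noteq> b"
  then have "\<bar>m\<bar> \<le> \<bar>a - b\<bar>"
    using assms(1) by (intro dvd_imp_le_int) (simp_all add: cong_iff_dvd_diff)
  then show False
    using assms(2) by linarith
qed

definition zigzag :: "nat \<Rightarrow> int" where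
  "zigzag j = (if even j then - int (j div 2) else int ((j + 1) div 2))"

lemma zigzag_add_Suc: "zigzag j + zigzag (Suc j) = int (Suc j mod 2)"
  unfolding zigzag_def by auto

lemma zigzag_bounds: "j < 2 * m \<Longrightarrow> - int m < zigzag j \<and> zigzag j \<le> int m"
  unfolding zigzag_def by auto

lemma zigzag_inj: "inj zigzag"
  unfolding zigzag_def by (rule injI) (auto split: if_splits, presburger+)

lemma zigzag_last: "0 < m \<Longrightarrow> zigzag (2 * m - 1) = int m"
  unfolding zigzag_def by auto

text \<open>The Walecki cycle number k on the vertices 0..2m, with 2m playing the role of the centre:
  2m, k, k+1, k-1, k+2, k-2, ..., k+m, where all but the centre are taken modulo 2m.\<close>
definition walecki_cycle :: "nat \<Rightarrow> nat \<Rightarrow> nat \<Rightarrow> nat" where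
  "walecki_cycle m k a = (if a = 0 then 2 * m else nat ((int k + zigzag (a - 1)) mod int (2 * m)))"

lemma walecki_cycle_0 [simp]: "walecki_cycle m k 0 = 2 * m"
  by (simp add: walecki_cycle_def)

lemma int_walecki_cycle_Suc:
  "0 < m \<Longrightarrow> int (walecki_cycle m k (Suc j)) = (int k + zigzag j) mod int (2 * m)"
  by (simp add: walecki_cycle_def)

lemma walecki_cycle_Suc_less: "0 < m \<Longrightarrow> walecki_cycle m k (Suc j) < 2 * m"
  by (simp add: walecki_cycle_def nat_less_iff)

lemma walecki_cycle_Suc_0: "k < m \<Longrightarrow> walecki_cycle m k (Suc 0) = k"
  by (simp add: walecki_cycle_def zigzag_def)

lemma walecki_cycle_last:
  assumes "k < m"
  shows "walecki_cycle m k (2 * m) = k + m"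
proof -
  have "int (walecki_cycle m k (2 * m)) = (int k + zigzag (2 * m - 1)) mod int (2 * m)"
    using assms int_walecki_cycle_Suc[of m k "2 * m - 1"] by simp
  also have "\<dots> = int (k + m)"
    unfolding zigzag_last[OF order.strict_trans1[OF zero_le assms]] using assms by simp
  finally show ?thesis
    by (simp only: of_nat_eq_iff)
qed

lemma walecki_cycle_bij:
  assumes "0 < m"
  shows "bij_betw (walecki_cycle m k) {0..<2 * m + 1} {0..<2 * m + 1}"
proof -
  have Suc_inj: "j = j'"
    if "j < 2 * m" "j' < 2 * m" "walecki_cycle m k (Suc j) = walecki_cycle m k (Suc j')" for j j'
  proof -
    have "[int k + zigzag j = int k + zigzag j'] (mod int (2 * m))"
      using that(3) int_walecki_cycle_Suc[OF assms] unfolding cong_def by metis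
    moreover have "\<bar>zigzag j - zigzag j'\<bar> < int (2 * m)"
      using zigzag_bounds[OF that(1)] zigzag_bounds[OF that(2)] by linarith
    ultimately have "zigzag j = zigzag j'"
      by (intro cong_abs_less_imp_eq_int) (simp_all add: cong_add_lcancel)
    then show "j = j'"
      using zigzag_inj by (simp add: inj_eq)
  qed
  have "inj_on (walecki_cycle m k) {0..<2 * m + 1}"
  proof (rule inj_onI)
    fix a b assume ab: "a \<in> {0..<2 * m + 1}" "b \<in> {0..<2 * m + 1}"
      and eq: "walecki_cycle m k a = walecki_cycle m k b"
    show "a = b"
    proof (cases a)
      case 0
      then show ?thesis
        using eq walecki_cycle_Suc_less[OF assms] by (cases b) auto
    next
      case (Suc j)
      then show ?thesis
        using eq ab Suc_inj walecki_cycle_Suc_less[OF assms, of k j] by (cases b) auto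
    qed
  qed
  moreover have "walecki_cycle m k a < 2 * m + 1" for a
    using walecki_cycle_Suc_less[OF assms, of k] by (cases a) (simp_all add: less_SucI)
  then have "walecki_cycle m k ` {0..<2 * m + 1} \<subseteq> {0..<2 * m + 1}"
    by auto
  ultimately show ?thesis
    unfolding bij_betw_def by (simp add: endo_inj_surj)
qed

text \<open>Along the cycle k the centre is adjacent to k and k + m, and consecutive
  non-centre vertices sum to 2k or 2k + 1 modulo 2m; so this recovers k from any edge of the cycle.\<close>
definition walecki_index :: "nat \<Rightarrow> nat \<Rightarrow> nat \<Rightarrow> nat" where
  "walecki_index m x y =
    (if x = 2 * m then y mod m else if y = 2 * m then x mod m else (x + y) mod (2 * m) div 2)"

lemma walecki_cycle_sum:
  assumes "k < m" "Suc j < 2 * m"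
  shows "(walecki_cycle m k (Suc j) + walecki_cycle m k (Suc (Suc j))) mod (2 * m) = 2 * k + Suc j mod 2"
proof -
  have m: "0 < m"
    using assms by simp
  have "int ((walecki_cycle m k (Suc j) + walecki_cycle m k (Suc (Suc j))) mod (2 * m)) =
      ((int k + zigzag j) mod int (2 * m) + (int k + zigzag (Suc j)) mod int (2 * m)) mod int (2 * m)"
    by (simp only: of_nat_mod of_nat_add int_walecki_cycle_Suc[OF m])
  also have "\<dots> = (2 * int k + (zigzag j + zigzag (Suc j))) mod int (2 * m)"
    by (simp add: mod_add_eq algebra_simps)
  also have "\<dots> = int (2 * k + Suc j mod 2) mod int (2 * m)"
    unfolding zigzag_add_Suc by simp
  also have "\<dots> = int (2 * k + Suc j mod 2)"
    using assms(1) mod_less_divisor[of 2 "Suc j"] by (intro mod_pos_pos_trivial) simp_all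
  finally show ?thesis
    by (simp only: of_nat_eq_iff)
qed

lemma walecki_index_cycle_edge:
  assumes "k < m" "a < 2 * m + 1"
    and "{x, y} = {walecki_cycle m k a, walecki_cycle m k (Suc a mod (2 * m + 1))}"
  shows "walecki_index m x y = k"
proof -
  have "a = 0 \<or> a = 2 * m \<or> (\<exists>j. a = Suc j \<and> Suc j < 2 * m)"
    using assms(2) by (cases a) auto
  then consider "a = 0" | "a = 2 * m" | j where "a = Suc j" "Suc j < 2 * m"
    by blast
  then show ?thesis
  proof cases
    case 1
    then have "{x, y} = {2 * m, k}"
      using assms by (simp add: walecki_cycle_Suc_0)
    then show ?thesis
      using assms(1) by (auto simp: doubleton_eq_iff walecki_index_def)
  next
    case 2
    then have "{x, y} = {k + m, 2 * m}"
      using assms by (simp add: walecki_cycle_last)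
    then show ?thesis
      using assms(1) by (auto simp: doubleton_eq_iff walecki_index_def)
  next
    case (3 j)
    then have "{x, y} = {walecki_cycle m k (Suc j), walecki_cycle m k (Suc (Suc j))}"
      using assms(3) by simp
    moreover have "walecki_cycle m k (Suc j) < 2 * m" "walecki_cycle m k (Suc (Suc j)) < 2 * m"
      using assms(1) by (simp_all add: walecki_cycle_Suc_less)
    ultimately have "x \<noteq> 2 * m" "y \<noteq> 2 * m"
      "(x + y) mod (2 * m) = 2 * k + Suc j mod 2"
      using walecki_cycle_sum[OF assms(1) 3(2)] by (auto simp: doubleton_eq_iff add.commute)
    then show ?thesis
      by (simp add: walecki_index_def)
  qed
qed

lemma walecki_index_less:
  assumes "0 < m" "x < 2 * m + 1" "y < 2 * m + 1" "x \<noteq> y"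
  shows "walecki_index m x y < m"
proof -
  have "(x + y) mod (2 * m) < m * 2"
    using mod_less_divisor[of "2 * m" "x + y"] assms(1) by (simp add: mult.commute)
  then show ?thesis
    using assms by (auto simp: walecki_index_def less_mult_imp_div_less)
qed

lemma walecki_cycle_cover_centre:
  assumes "y < 2 * m"
  shows "\<exists>a<2 * m + 1. {2 * m, y} =
    {walecki_cycle m (y mod m) a, walecki_cycle m (y mod m) (Suc a mod (2 * m + 1))}"
proof (cases "y < m")
  case True
  then show ?thesis
    by (intro exI[of _ 0]) (simp add: walecki_cycle_Suc_0)
next
  case False
  then have "y = y mod m + m" "y mod m < m"
    using assms by (simp_all add: le_mod_geq)
  then have "walecki_cycle m (y mod m) (2 * m) = y"
    using walecki_cycle_last by simp
  then show ?thesis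
    by (intro exI[of _ "2 * m"]) (simp add: insert_commute)
qed

lemma walecki_cycle_eqI:
  assumes "0 < m" "z < 2 * m" "[int z = int k + zigzag j] (mod int (2 * m))"
  shows "z = walecki_cycle m k (Suc j)"
proof -
  have "int z = int (walecki_cycle m k (Suc j))"
    using assms int_walecki_cycle_Suc[OF assms(1)] unfolding cong_def by simp
  then show ?thesis
    by (simp only: of_nat_eq_iff)
qed

lemma walecki_cycle_position:
  assumes "0 < m" "x < 2 * m"
  obtains j where "j < 2 * m" "x = walecki_cycle m k (Suc j)"
proof -
  have "x \<in> walecki_cycle m k ` {0..<2 * m + 1}"
    using walecki_cycle_bij[OF assms(1), of k] assms(2) by (simp add: bij_betw_def)
  then obtain a where "a < 2 * m + 1" "x = walecki_cycle m k a"
    by auto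
  moreover have "a \<noteq> 0"
    using assms(2) calculation(2) by (cases a) auto
  ultimately show ?thesis
    using that by (cases a) auto
qed

lemma walecki_cycle_cover:
  assumes "0 < m" "x < 2 * m" "y < 2 * m" "x \<noteq> y"
  shows "\<exists>a<2 * m + 1. {x, y} =
    {walecki_cycle m (walecki_index m x y) a, walecki_cycle m (walecki_index m x y) (Suc a mod (2 * m + 1))}"
proof -
  define M where "M = int (2 * m)"
  define k where "k = walecki_index m x y"
  define r where "r = (x + y) mod (2 * m) mod 2"
  have k: "(x + y) mod (2 * m) = 2 * k + r"
    using assms unfolding k_def r_def walecki_index_def by simp
  have r: "r = 0 \<or> r = 1"
    unfolding r_def by auto
  let ?w = "walecki_cycle m k"
  obtain j0 where j0: "j0 < 2 * m" "x = ?w (Suc j0)"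
    using walecki_cycle_position[OF assms(1,2)] by blast
  txt \<open>The partner y of x is forced by x + y \<equiv> 2k + r, and the zigzag sums
    zigzag j + zigzag (j + 1) = (j + 1) mod 2 make it a neighbour of x on the cycle.\<close>
  have "[int x = int k + zigzag j0] (mod M)"
    using int_walecki_cycle_Suc[OF assms(1)] j0(2) unfolding M_def cong_def by simp
  moreover have "[int x + int y = 2 * int k + int r] (mod M)"
  proof -
    have "[x + y = 2 * k + r] (mod 2 * m)"
      unfolding cong_def k[symmetric] by simp
    then show ?thesis
      unfolding M_def cong_int_iff[symmetric] by simp
  qed
  ultimately have "[int x + int y - int x = 2 * int k + int r - (int k + zigzag j0)] (mod M)"
    by (intro cong_diff)
  then have y: "[int y = int k + (int r - zigzag j0)] (mod M)"
    by (simp add: algebra_simps)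
  have "r = Suc j0 mod 2 \<and> Suc j0 < 2 * m \<or> r = Suc j0 mod 2 \<and> Suc j0 = 2 * m \<or>
      r \<noteq> Suc j0 mod 2 \<and> (\<exists>j1. j0 = Suc j1) \<or> r \<noteq> Suc j0 mod 2 \<and> j0 = 0"
    using j0(1) by (cases j0) auto
  then consider "r = Suc j0 mod 2" "Suc j0 < 2 * m" | "r = Suc j0 mod 2" "Suc j0 = 2 * m"
    | j1 where "r \<noteq> Suc j0 mod 2" "j0 = Suc j1" | "r \<noteq> Suc j0 mod 2" "j0 = 0"
    by blast
  then show ?thesis
  proof cases
    case 1
    then have "zigzag (Suc j0) = int r - zigzag j0"
      using zigzag_add_Suc[of j0] by simp
    then have "y = ?w (Suc (Suc j0))"
      using y assms unfolding M_def by (intro walecki_cycle_eqI) simp_all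
    then show ?thesis
      using j0 1(2) unfolding k_def by (intro exI[of _ "Suc j0"]) simp
  next
    case 2
    then have "j0 = 2 * m - 1" "r = 0"
      by simp_all
    then have "zigzag j0 = int m" "r = 0"
      using zigzag_last[OF assms(1)] by simp_all
    moreover have "[int k - int m = int k + int m] (mod M)"
      unfolding M_def cong_iff_lin by (intro exI[of _ 1]) simp
    ultimately have "[int y = int k + zigzag j0] (mod M)"
      using y cong_trans by fastforce
    then show ?thesis
      using walecki_cycle_eqI[OF assms(1,3)] j0(2) assms(4) unfolding M_def by simp
  next
    case (3 j1)
    then have "r = Suc j1 mod 2"
      using r by presburger
    then have "zigzag j1 = int r - zigzag j0"
      using zigzag_add_Suc[of j1] 3(2) by simp
    then have "y = ?w (Suc j1)"
      using y assms unfolding M_def by (intro walecki_cycle_eqI) simp_all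
    then show ?thesis
      using j0 3(2) unfolding k_def by (intro exI[of _ "Suc j1"]) (simp add: insert_commute)
  next
    case 4
    then have "[int y = int k + zigzag j0] (mod M)"
      using y r by (simp add: zigzag_def)
    then show ?thesis
      using walecki_cycle_eqI[OF assms(1,3)] j0(2) assms(4) unfolding M_def by simp
  qed
qed

lemma walecki_cycle_edge_exists:
  assumes "0 < m" "x < 2 * m + 1" "y < 2 * m + 1" "x \<noteq> y"
  shows "\<exists>a<2 * m + 1. {x, y} =
    {walecki_cycle m (walecki_index m x y) a, walecki_cycle m (walecki_index m x y) (Suc a mod (2 * m + 1))}"
proof -
  consider "x = 2 * m" "y < 2 * m" | "y = 2 * m" "x < 2 * m" | "x < 2 * m" "y < 2 * m"
    using assms(2-4) by linarith
  then show ?thesis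
  proof cases
    case 1
    then show ?thesis
      using walecki_cycle_cover_centre[of y m] by (simp add: walecki_index_def)
  next
    case 2
    then show ?thesis
      using walecki_cycle_cover_centre[of x m] by (simp add: walecki_index_def insert_commute)
  qed (use walecki_cycle_cover assms in blast)
qed

theorem complete_graph_hamiltonian_decomposition:
  assumes "0 < m"
  shows "edge_partition_into (complete_graph (2 * m + 1)) (cycle_graph (2 * m + 1)) m"
proof -
  define n where "n = 2 * m + 1"
  define C where "C k = (\<lambda>E. walecki_cycle m k ` E) ` edges (cycle_graph n)" for k
  have C_iff: "E \<in> C k \<longleftrightarrow> (\<exists>a<n. E = {walecki_cycle m k a, walecki_cycle m k (Suc a mod n)})" for E k
  proof
    assume "\<exists>a<n. E = {walecki_cycle m k a, walecki_cycle m k (Suc a mod n)}"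
    then obtain a where "a < n" "E = walecki_cycle m k ` {a, Suc a mod n}"
      by auto
    then show "E \<in> C k"
      unfolding C_def edges_cycle_graph by (intro image_eqI[where x = "{a, Suc a mod n}"]) auto
  qed (auto simp: C_def edges_cycle_graph)
  have bij: "bij_betw (walecki_cycle m k) {0..<n} {0..<n}" for k
    unfolding n_def using walecki_cycle_bij[OF assms] .
  show ?thesis
    unfolding n_def[symmetric] complete_graph_eq_complete_graph_on
  proof (rule edge_partition_intoI[where C = C])
    fix k
    show "is_copy (cycle_graph n) (complete_graph_on {0..<n}) (C k)"
      unfolding is_copy_def C_def using bij[of k] by (intro exI[of _ "walecki_cycle m k"]) (simp add: bij_betw_def)
    show "C k \<subseteq> edges (complete_graph_on {0..<n})"
    proof
      fix E assume "E \<in> C k"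
      then obtain a where a: "a < n" "E = {walecki_cycle m k a, walecki_cycle m k (Suc a mod n)}"
        unfolding C_iff by blast
      have "a \<noteq> Suc a mod n"
        using a(1) assms unfolding n_def by (cases "Suc a = n") (auto simp: n_def)
      moreover have "Suc a mod n < n"
        unfolding n_def by simp
      ultimately have "walecki_cycle m k a \<noteq> walecki_cycle m k (Suc a mod n)"
        using inj_onD[OF bij_betw_imp_inj_on[OF bij[of k]]] a(1) by fastforce
      moreover have "walecki_cycle m k a < n" "walecki_cycle m k (Suc a mod n) < n"
        using bij[of k] a(1) assms unfolding bij_betw_def n_def by auto
      ultimately show "E \<in> edges (complete_graph_on {0..<n})"
        unfolding edges_complete_graph_on a(2) by auto
    qed
  next
    fix E assume "E \<in> edges (complete_graph_on {0..<n})"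
    then obtain x y where xy: "E = {x, y}" "x < n" "y < n" "x \<noteq> y"
      unfolding edges_complete_graph_on by auto
    show "\<exists>!k. k < m \<and> E \<in> C k"
    proof
      show "walecki_index m x y < m \<and> E \<in> C (walecki_index m x y)"
        using walecki_index_less[OF assms] walecki_cycle_edge_exists[OF assms] xy
        unfolding C_iff n_def by simp
    next
      fix k assume "k < m \<and> E \<in> C k"
      then show "k = walecki_index m x y"
        using walecki_index_cycle_edge xy unfolding C_iff n_def by metis
    qed
  qed
qed

section \<open>Fields of order p^2\<close>

context field
begin

text \<open>The pair (a, b) stands for a + b \<surd>d.\<close>
definition quadratic_ext :: "'a \<Rightarrow> ('a \<times> 'a) ring" where
  "quadratic_ext d = \<lparr>carrier = carrier R \<times> carrier R,
     monoid.mult = (\<lambda>x y. (fst x \<otimes> fst y \<oplus> d \<otimes> (snd x \<otimes> snd y), fst x \<otimes> snd y \<oplus> snd x \<otimes> fst y)),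
     one = (\<one>, \<zero>), zero = (\<zero>, \<zero>),
     add = (\<lambda>x y. (fst x \<oplus> fst y, snd x \<oplus> snd y))\<rparr>"

lemma cring_quadratic_ext:
  assumes d: "d \<in> carrier R"
  shows "cring (quadratic_ext d)"
proof (intro cringI abelian_groupI comm_monoidI)
  fix x y z assume x: "x \<in> carrier (quadratic_ext d)" and y: "y \<in> carrier (quadratic_ext d)"
    and z: "z \<in> carrier (quadratic_ext d)"
  obtain a b a' b' a'' b'' where "x = (a, b)" "y = (a', b')" "z = (a'', b'')"
    and "a \<in> carrier R" "b \<in> carrier R" "a' \<in> carrier R" "b' \<in> carrier R"
      "a'' \<in> carrier R" "b'' \<in> carrier R"
    using x y z by (auto simp: quadratic_ext_def)
  note xyz = this
  show "x \<oplus>\<^bsub>quadratic_ext d\<^esub> y \<oplus>\<^bsub>quadratic_ext d\<^esub> z =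
      x \<oplus>\<^bsub>quadratic_ext d\<^esub> (y \<oplus>\<^bsub>quadratic_ext d\<^esub> z)"
    using xyz by (simp add: quadratic_ext_def a_assoc)
  show "x \<otimes>\<^bsub>quadratic_ext d\<^esub> y \<otimes>\<^bsub>quadratic_ext d\<^esub> z =
      x \<otimes>\<^bsub>quadratic_ext d\<^esub> (y \<otimes>\<^bsub>quadratic_ext d\<^esub> z)"
    using xyz d by (simp add: quadratic_ext_def) algebra
  show "(x \<oplus>\<^bsub>quadratic_ext d\<^esub> y) \<otimes>\<^bsub>quadratic_ext d\<^esub> z =
      x \<otimes>\<^bsub>quadratic_ext d\<^esub> z \<oplus>\<^bsub>quadratic_ext d\<^esub> y \<otimes>\<^bsub>quadratic_ext d\<^esub> z"
    using xyz d by (simp add: quadratic_ext_def) algebra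
next
  fix x y assume x: "x \<in> carrier (quadratic_ext d)" and y: "y \<in> carrier (quadratic_ext d)"
  obtain a b a' b' where "x = (a, b)" "y = (a', b')"
    and "a \<in> carrier R" "b \<in> carrier R" "a' \<in> carrier R" "b' \<in> carrier R"
    using x y by (auto simp: quadratic_ext_def)
  note xy = this
  show "x \<oplus>\<^bsub>quadratic_ext d\<^esub> y \<in> carrier (quadratic_ext d)"
    using xy by (simp add: quadratic_ext_def)
  show "x \<otimes>\<^bsub>quadratic_ext d\<^esub> y \<in> carrier (quadratic_ext d)"
    using xy d by (simp add: quadratic_ext_def)
  show "x \<oplus>\<^bsub>quadratic_ext d\<^esub> y = y \<oplus>\<^bsub>quadratic_ext d\<^esub> x"
    using xy by (simp add: quadratic_ext_def a_comm)
  show "x \<otimes>\<^bsub>quadratic_ext d\<^esub> y = y \<otimes>\<^bsub>quadratic_ext d\<^esub> x"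
    using xy d by (simp add: quadratic_ext_def) algebra
next
  fix x assume "x \<in> carrier (quadratic_ext d)"
  then obtain a b where x: "x = (a, b)" "a \<in> carrier R" "b \<in> carrier R"
    by (auto simp: quadratic_ext_def)
  show "\<zero>\<^bsub>quadratic_ext d\<^esub> \<oplus>\<^bsub>quadratic_ext d\<^esub> x = x"
    using x by (simp add: quadratic_ext_def)
  show "\<one>\<^bsub>quadratic_ext d\<^esub> \<otimes>\<^bsub>quadratic_ext d\<^esub> x = x"
    using x d by (simp add: quadratic_ext_def)
  show "\<exists>y\<in>carrier (quadratic_ext d). y \<oplus>\<^bsub>quadratic_ext d\<^esub> x = \<zero>\<^bsub>quadratic_ext d\<^esub>"
    using x by (intro bexI[of _ "(\<ominus> a, \<ominus> b)"]) (simp_all add: quadratic_ext_def l_neg)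
qed (simp_all add: quadratic_ext_def)

lemma quadratic_norm_nonzero:
  assumes d: "d \<in> carrier R" "\<And>x. x \<in> carrier R \<Longrightarrow> x \<otimes> x \<noteq> d"
    and ab: "a \<in> carrier R" "b \<in> carrier R" "(a, b) \<noteq> (\<zero>, \<zero>)"
  shows "a \<otimes> a \<ominus> d \<otimes> (b \<otimes> b) \<noteq> \<zero>"
proof
  assume norm: "a \<otimes> a \<ominus> d \<otimes> (b \<otimes> b) = \<zero>"
  show False
  proof (cases "b = \<zero>")
    case True
    then have "a \<otimes> a = \<zero>"
      using norm ab d by simp
    then show False
      using True ab integral by blast
  next
    case False
    then have b: "b \<in> Units R"
      using ab field_Units by simp
    have inv_b: "inv b \<in> carrier R"
      using b by simp
    have "a \<otimes> a = d \<otimes> (b \<otimes> b)"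
      using norm ab d by simp
    then have "(a \<otimes> inv b) \<otimes> (a \<otimes> inv b) = d \<otimes> (b \<otimes> b) \<otimes> (inv b \<otimes> inv b)"
      using ab inv_b by (metis m_assoc m_closed m_comm)
    also have "\<dots> = d \<otimes> ((b \<otimes> inv b) \<otimes> (b \<otimes> inv b))"
      using ab d inv_b by algebra
    also have "\<dots> = d"
      using b d by simp
    finally show False
      using d ab inv_b by simp
  qed
qed

lemma field_quadratic_ext:
  assumes d: "d \<in> carrier R" "\<And>x. x \<in> carrier R \<Longrightarrow> x \<otimes> x \<noteq> d"
  shows "field (quadratic_ext d)"
proof -
  interpret Q: cring "quadratic_ext d"
    by (rule cring_quadratic_ext[OF d(1)])
  show ?thesis
  proof (rule Q.cring_fieldI2)
    fix x assume x: "x \<in> carrier (quadratic_ext d)" "x \<noteq> \<zero>\<^bsub>quadratic_ext d\<^esub>"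
    then obtain a b where ab: "x = (a, b)" "a \<in> carrier R" "b \<in> carrier R" "(a, b) \<noteq> (\<zero>, \<zero>)"
      by (auto simp: quadratic_ext_def)
    define u where "u = inv (a \<otimes> a \<ominus> d \<otimes> (b \<otimes> b))"
    have u: "u \<in> carrier R" "(a \<otimes> a \<ominus> d \<otimes> (b \<otimes> b)) \<otimes> u = \<one>"
      using quadratic_norm_nonzero[OF d ab(2-4)] ab d field_Units unfolding u_def by simp_all
    have "x \<otimes>\<^bsub>quadratic_ext d\<^esub> (a \<otimes> u, \<ominus> b \<otimes> u) = \<one>\<^bsub>quadratic_ext d\<^esub>"
    proof -
      have "a \<otimes> (a \<otimes> u) \<oplus> d \<otimes> (b \<otimes> (\<ominus> b \<otimes> u)) = (a \<otimes> a \<ominus> d \<otimes> (b \<otimes> b)) \<otimes> u"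
        "a \<otimes> (\<ominus> b \<otimes> u) \<oplus> b \<otimes> (a \<otimes> u) = \<zero>"
        using ab u d by algebra+
      then show ?thesis
        using u unfolding ab by (simp add: quadratic_ext_def)
    qed
    moreover have "(a \<otimes> u, \<ominus> b \<otimes> u) \<in> carrier (quadratic_ext d)"
      using ab u by (simp add: quadratic_ext_def)
    ultimately show "\<exists>y\<in>carrier (quadratic_ext d). x \<otimes>\<^bsub>quadratic_ext d\<^esub> y = \<one>\<^bsub>quadratic_ext d\<^esub>"
      by blast
  qed (simp add: quadratic_ext_def)
qed

lemma card_quadratic_ext:
  "finite (carrier R) \<Longrightarrow> card (carrier (quadratic_ext d)) = card (carrier R) ^ 2"
  by (simp add: quadratic_ext_def card_cartesian_product power2_eq_square)

lemma finite_quadratic_ext: "finite (carrier R) \<Longrightarrow> finite (carrier (quadratic_ext d))"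
  by (simp add: quadratic_ext_def)

lemma exists_nonsquare:
  assumes "finite (carrier R)" "\<one> \<noteq> \<ominus> \<one>"
  shows "\<exists>d\<in>carrier R. \<forall>x\<in>carrier R. x \<otimes> x \<noteq> d"
proof (rule ccontr)
  assume "\<not> ?thesis"
  then have "(\<lambda>x. x \<otimes> x) ` carrier R = carrier R"
    by (auto intro: m_closed)
  then have "inj_on (\<lambda>x. x \<otimes> x) (carrier R)"
    using assms(1) by (intro eq_card_imp_inj_on) simp_all
  moreover have "\<one> \<otimes> \<one> = \<ominus> \<one> \<otimes> \<ominus> \<one>"
    by algebra
  ultimately show False
    using assms(2) by (meson inj_onD one_closed a_inv_closed)
qed

end

lemma exists_field_card_prime_square:
  assumes "prime p" "odd p"
  shows "\<exists>R :: (int \<times> int) ring. field R \<and> finite (carrier R) \<and> card (carrier R) = p ^ 2"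
proof -
  interpret Zp: residues_prime p "residue_ring (int p)"
    by (simp add: residues_prime_def assms(1))
  have fin: "finite (carrier (residue_ring (int p)))" "card (carrier (residue_ring (int p))) = p"
    using prime_ge_2_nat[OF assms(1)] by (simp_all add: Zp.res_carrier_eq)
  have "\<one>\<^bsub>residue_ring (int p)\<^esub> \<noteq> \<ominus>\<^bsub>residue_ring (int p)\<^esub> \<one>\<^bsub>residue_ring (int p)\<^esub>"
    using Zp.one_eq_neg_one assms(2) by fastforce
  then obtain d where "d \<in> carrier (residue_ring (int p))"
    "\<And>x. x \<in> carrier (residue_ring (int p)) \<Longrightarrow> x \<otimes>\<^bsub>residue_ring (int p)\<^esub> x \<noteq> d"
    using Zp.exists_nonsquare[OF fin(1)] by blast
  then have "field (Zp.quadratic_ext d)"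
    by (rule Zp.field_quadratic_ext)
  then show ?thesis
    using Zp.finite_quadratic_ext[OF fin(1)] Zp.card_quadratic_ext[OF fin(1)] fin(2)
    by (intro exI[of _ "Zp.quadratic_ext d"]) simp
qed

section \<open>Rook's graphs in the affine plane\<close>

context field
begin

definition line_point :: "'a \<times> 'a \<Rightarrow> 'a \<times> 'a \<Rightarrow> 'a \<Rightarrow> 'a \<times> 'a" where
  "line_point P v c = (fst P \<oplus> c \<otimes> fst v, snd P \<oplus> c \<otimes> snd v)"

definition grid_point :: "'a \<times> 'a \<Rightarrow> 'a \<times> 'a \<Rightarrow> 'a \<Rightarrow> 'a \<Rightarrow> 'a \<times> 'a" where
  "grid_point v w \<alpha> \<beta> = (\<alpha> \<otimes> fst v \<oplus> \<beta> \<otimes> fst w, \<alpha> \<otimes> snd v \<oplus> \<beta> \<otimes> snd w)"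

lemma line_point_zero: "P \<in> carrier R \<times> carrier R \<Longrightarrow> v \<in> carrier R \<times> carrier R \<Longrightarrow> line_point P v \<zero> = P"
  by (auto simp: line_point_def)

lemma line_point_back:
  assumes "P \<in> carrier R \<times> carrier R" "v \<in> carrier R \<times> carrier R" "c \<in> carrier R"
  shows "line_point (line_point P v c) v (\<ominus> c) = P"
  using assms by (cases P, cases v) (simp add: line_point_def, algebra)

lemma grid_point_closed:
  "v \<in> carrier R \<times> carrier R \<Longrightarrow> w \<in> carrier R \<times> carrier R \<Longrightarrow> \<alpha> \<in> carrier R \<Longrightarrow> \<beta> \<in> carrier R \<Longrightarrow>
    grid_point v w \<alpha> \<beta> \<in> carrier R \<times> carrier R"
  by (auto simp: grid_point_def)

lemma grid_point_add_left:
  assumes "v \<in> carrier R \<times> carrier R" "w \<in> carrier R \<times> carrier R" "\<alpha> \<in> carrier R" "\<beta> \<in> carrier R" "c \<in> carrier R"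
  shows "grid_point v w (\<alpha> \<oplus> c) \<beta> = line_point (grid_point v w \<alpha> \<beta>) v c"
  using assms by (cases v, cases w) (simp add: grid_point_def line_point_def, algebra)

lemma grid_point_add_right:
  assumes "v \<in> carrier R \<times> carrier R" "w \<in> carrier R \<times> carrier R" "\<alpha> \<in> carrier R" "\<beta> \<in> carrier R" "c \<in> carrier R"
  shows "grid_point v w \<alpha> (\<beta> \<oplus> c) = line_point (grid_point v w \<alpha> \<beta>) w c"
  using assms by (cases v, cases w) (simp add: grid_point_def line_point_def, algebra)

lemma add_eq_add_imp_minus_eq:
  assumes "a \<oplus> b = a' \<oplus> b'" "a \<in> carrier R" "b \<in> carrier R" "a' \<in> carrier R" "b' \<in> carrier R"
  shows "a \<ominus> a' = b' \<ominus> b"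
proof -
  have "a \<ominus> a' = (a \<oplus> b) \<ominus> (a' \<oplus> b)"
    using assms(2-5) by algebra
  also have "\<dots> = (a' \<oplus> b') \<ominus> (a' \<oplus> b)"
    by (simp only: assms(1))
  also have "\<dots> = b' \<ominus> b"
    using assms(2-5) by algebra
  finally show ?thesis .
qed

lemma grid_point_eq_imp:
  assumes "v \<in> carrier R \<times> carrier R" "w \<in> carrier R \<times> carrier R"
    and "\<alpha> \<in> carrier R" "\<beta> \<in> carrier R" "\<alpha>' \<in> carrier R" "\<beta>' \<in> carrier R"
    and "grid_point v w \<alpha> \<beta> = grid_point v w \<alpha>' \<beta>'"
  shows "line_point (\<zero>, \<zero>) v (\<alpha> \<ominus> \<alpha>') = line_point (\<zero>, \<zero>) w (\<beta>' \<ominus> \<beta>)"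
proof -
  have scale_diff: "(x \<ominus> x') \<otimes> y = (z' \<ominus> z) \<otimes> u"
    if "x \<otimes> y \<oplus> z \<otimes> u = x' \<otimes> y \<oplus> z' \<otimes> u"
      "x \<in> carrier R" "x' \<in> carrier R" "y \<in> carrier R" "z \<in> carrier R" "z' \<in> carrier R" "u \<in> carrier R"
    for x x' y z z' u
  proof -
    have "(x \<ominus> x') \<otimes> y = x \<otimes> y \<ominus> x' \<otimes> y"
      using that(2-7) by algebra
    also have "\<dots> = z' \<otimes> u \<ominus> z \<otimes> u"
      using that by (intro add_eq_add_imp_minus_eq) simp_all
    also have "\<dots> = (z' \<ominus> z) \<otimes> u"
      using that(2-7) by algebra
    finally show ?thesis .
  qed
  obtain v1 v2 w1 w2 where vw: "v = (v1, v2)" "w = (w1, w2)"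
    by (cases v, cases w)
  from assms(7) have "\<alpha> \<otimes> v1 \<oplus> \<beta> \<otimes> w1 = \<alpha>' \<otimes> v1 \<oplus> \<beta>' \<otimes> w1" "\<alpha> \<otimes> v2 \<oplus> \<beta> \<otimes> w2 = \<alpha>' \<otimes> v2 \<oplus> \<beta>' \<otimes> w2"
    unfolding vw grid_point_def by simp_all
  then show ?thesis
    using assms(1-6) scale_diff unfolding vw line_point_def by simp
qed

end

locale enumerated_field = field +
  fixes q :: nat and e :: "nat \<Rightarrow> 'a"
  assumes enum: "bij_betw e {0..<q} (carrier R)"
begin

lemma enum_closed: "a < q \<Longrightarrow> e a \<in> carrier R"
  using enum by (auto simp: bij_betw_def)

lemma finite_carrier: "finite (carrier R)"
  using bij_betw_finite enum by blast

lemma card_carrier: "card (carrier R) = q"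
  using bij_betw_same_card[OF enum] by simp

text \<open>The q + 1 directions of lines in the affine plane over R: slope e r for r < q,
  and the vertical direction for r = q.\<close>
definition direction :: "nat \<Rightarrow> 'a \<times> 'a" where
  "direction r = (if r < q then (\<one>, e r) else (\<zero>, \<one>))"

definition along :: "nat \<Rightarrow> 'a \<times> 'a \<Rightarrow> 'a \<times> 'a \<Rightarrow> bool" where
  "along r P Q \<longleftrightarrow> (\<exists>c\<in>carrier R. Q = line_point P (direction r) c)"

lemma direction_closed: "direction r \<in> carrier R \<times> carrier R"
  using enum by (auto simp: direction_def bij_betw_def)

lemma line_point_direction_cancel:
  assumes "P \<in> carrier R \<times> carrier R" "c \<in> carrier R" "c' \<in> carrier R"
    and "line_point P (direction r) c = line_point P (direction r) c'"
  shows "c = c'"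
proof (cases "r < q")
  case True
  then show ?thesis
    using assms by (auto simp: line_point_def direction_def)
next
  case False
  then show ?thesis
    using assms by (auto simp: line_point_def direction_def)
qed

lemma along_sym:
  assumes "P \<in> carrier R \<times> carrier R" "along r P Q"
  shows "along r Q P"
proof -
  obtain c where "c \<in> carrier R" "Q = line_point P (direction r) c"
    using assms(2) unfolding along_def by blast
  then have "P = line_point Q (direction r) (\<ominus> c)"
    using line_point_back[OF assms(1) direction_closed] by simp
  then show ?thesis
    unfolding along_def using \<open>c \<in> carrier R\<close> by (intro bexI[of _ "\<ominus> c"]) simp_all
qed


lemma along_exists:
  assumes "P \<in> carrier R \<times> carrier R" "Q \<in> carrier R \<times> carrier R"
  shows "\<exists>r\<le>q. along r P Q"
proof -
  obtain x1 y1 x2 y2 where P: "P = (x1, y1)" and Q: "Q = (x2, y2)"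
    and xy: "x1 \<in> carrier R" "y1 \<in> carrier R" "x2 \<in> carrier R" "y2 \<in> carrier R"
    using assms by auto
  show ?thesis
  proof (cases "x2 = x1")
    case True
    have "Q = line_point P (direction q) (y2 \<ominus> y1)"
      using xy unfolding P Q True line_point_def direction_def by (simp, algebra)
    then show ?thesis
      using xy unfolding along_def by (intro exI[of _ q]) auto
  next
    case False
    define dx dy where "dx = x2 \<ominus> x1" and "dy = y2 \<ominus> y1"
    have d: "dx \<in> carrier R" "dy \<in> carrier R" "inv dx \<in> carrier R" "dx \<otimes> inv dx = \<one>"
      using xy False field_Units unfolding dx_def dy_def by simp_all
    then obtain r where r: "r < q" "e r = dy \<otimes> inv dx"
      using enum unfolding bij_betw_def by (metis atLeastLessThan_iff imageE m_closed)
    have "dx \<otimes> e r = dy \<otimes> (dx \<otimes> inv dx)"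
      unfolding r(2) using d by (rule_tac m_lcomm) simp_all
    then have "dx \<otimes> e r = y2 \<ominus> y1"
      using d unfolding dy_def by simp
    then have "Q = line_point P (direction r) (x2 \<ominus> x1)"
      using xy r(1) unfolding P Q line_point_def direction_def dx_def by (simp, algebra)
    then show ?thesis
      using xy r(1) unfolding along_def by (intro exI[of _ r]) auto
  qed
qed

lemma along_unique:
  assumes "P \<in> carrier R \<times> carrier R" "P \<noteq> Q" "r \<le> q" "r' \<le> q" "along r P Q" "along r' P Q"
  shows "r = r'"
proof -
  obtain c c' where c: "c \<in> carrier R" "Q = line_point P (direction r) c"
    and c': "c' \<in> carrier R" "Q = line_point P (direction r') c'"
    using assms(5,6) unfolding along_def by blast
  have "c \<noteq> \<zero>"
    using c assms(1,2) line_point_zero[OF assms(1) direction_closed] by auto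
  have eq: "c \<otimes> fst (direction r) = c' \<otimes> fst (direction r')"
    "c \<otimes> snd (direction r) = c' \<otimes> snd (direction r')"
    using c c' assms(1) direction_closed[of r] direction_closed[of r'] by (auto simp: line_point_def)
  consider "r < q" "r' < q" | "r < q" "r' = q" | "r = q" "r' < q" | "r = q" "r' = q"
    using assms(3,4) by linarith
  then show ?thesis
  proof cases
    case 1
    then have "c = c'" "c \<otimes> e r = c' \<otimes> e r'"
      using eq c c' by (simp_all add: direction_def)
    then have "e r = e r'"
      using m_lcancel[OF \<open>c \<noteq> \<zero>\<close> c(1) enum_closed enum_closed] 1 by simp
    then show ?thesis
      using enum 1 by (auto simp: bij_betw_def inj_on_def)
  next
    case 2
    then show ?thesis
      using eq c c' \<open>c \<noteq> \<zero>\<close> by (simp add: direction_def)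
  next
    case 3
    then have "c' = \<zero>"
      using eq c c' by (simp add: direction_def)
    then show ?thesis
      using 3 eq c c' \<open>c \<noteq> \<zero>\<close> enum_closed by (simp add: direction_def)
  qed simp
qed


lemma grid_point_direction_inj:
  assumes "r \<le> q" "r' \<le> q" "r \<noteq> r'"
    and carr: "\<alpha> \<in> carrier R" "\<beta> \<in> carrier R" "\<alpha>' \<in> carrier R" "\<beta>' \<in> carrier R"
    and eq: "grid_point (direction r) (direction r') \<alpha> \<beta> = grid_point (direction r) (direction r') \<alpha>' \<beta>'"
  shows "\<alpha> = \<alpha>' \<and> \<beta> = \<beta>'"
proof -
  have O: "(\<zero>, \<zero>) \<in> carrier R \<times> carrier R"
    by simp
  define X where "X = line_point (\<zero>, \<zero>) (direction r) (\<alpha> \<ominus> \<alpha>')"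
  have X': "X = line_point (\<zero>, \<zero>) (direction r') (\<beta>' \<ominus> \<beta>)"
    unfolding X_def using grid_point_eq_imp[OF direction_closed direction_closed carr eq] .
  have "X = (\<zero>, \<zero>)"
  proof (rule ccontr)
    assume "X \<noteq> (\<zero>, \<zero>)"
    moreover have "along r (\<zero>, \<zero>) X"
      unfolding along_def X_def using carr by auto
    moreover have "along r' (\<zero>, \<zero>) X"
      unfolding along_def X' using carr by auto
    ultimately show False
      using along_unique[OF O _ assms(1,2)] assms(3) by metis
  qed
  then have "line_point (\<zero>, \<zero>) (direction r) (\<alpha> \<ominus> \<alpha>') = line_point (\<zero>, \<zero>) (direction r) \<zero>"
    "line_point (\<zero>, \<zero>) (direction r') (\<beta>' \<ominus> \<beta>) = line_point (\<zero>, \<zero>) (direction r') \<zero>"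
    unfolding X_def[symmetric] X'[symmetric] using line_point_zero[OF O direction_closed] by simp_all
  then have "\<alpha> \<ominus> \<alpha>' = \<zero>" "\<beta>' \<ominus> \<beta> = \<zero>"
    using line_point_direction_cancel[OF O minus_closed[OF carr(1,3)] zero_closed]
      line_point_direction_cancel[OF O minus_closed[OF carr(4,2)] zero_closed] by blast+
  then show ?thesis
    using carr by simp
qed

lemma grid_point_direction_bij:
  assumes "r \<le> q" "r' \<le> q" "r \<noteq> r'"
  shows "bij_betw (\<lambda>(\<alpha>, \<beta>). grid_point (direction r) (direction r') \<alpha> \<beta>)
    (carrier R \<times> carrier R) (carrier R \<times> carrier R)"
proof -
  have "inj_on (\<lambda>(\<alpha>, \<beta>). grid_point (direction r) (direction r') \<alpha> \<beta>) (carrier R \<times> carrier R)"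
    using grid_point_direction_inj[OF assms] by (auto intro!: inj_onI)
  moreover have "(\<lambda>(\<alpha>, \<beta>). grid_point (direction r) (direction r') \<alpha> \<beta>) ` (carrier R \<times> carrier R)
      \<subseteq> carrier R \<times> carrier R"
    by (clarsimp simp: image_subset_iff grid_point_closed direction_closed)
  ultimately show ?thesis
    unfolding bij_betw_def using finite_carrier by (simp add: endo_inj_surj)
qed

text \<open>Pairing the directions 2t and 2t + 1 gives coordinates on the plane in which lines of
  direction 2t are rows and lines of direction 2t + 1 are columns.\<close>
definition grid :: "nat \<Rightarrow> nat \<times> nat \<Rightarrow> 'a \<times> 'a" where
  "grid t = (\<lambda>(a, b). grid_point (direction (2 * t)) (direction (Suc (2 * t))) (e a) (e b))"

lemma grid_bij:
  assumes "Suc (2 * t) \<le> q"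
  shows "bij_betw (grid t) ({0..<q} \<times> {0..<q}) (carrier R \<times> carrier R)"
proof -
  have "grid t = (\<lambda>(\<alpha>, \<beta>). grid_point (direction (2 * t)) (direction (Suc (2 * t))) \<alpha> \<beta>) \<circ> map_prod e e"
    by (auto simp: grid_def)
  then show ?thesis
    using bij_betw_trans[OF bij_betw_map_prod[OF enum enum] grid_point_direction_bij] assms by simp
qed

lemma grid_row:
  assumes "Suc (2 * t) \<le> q" "a < q" "a' < q" "b < q"
  shows "grid t (a', b) = line_point (grid t (a, b)) (direction (2 * t)) (e a' \<ominus> e a)"
proof -
  have "e a' = e a \<oplus> (e a' \<ominus> e a)"
    using assms enum_closed by algebra
  then show ?thesis
    unfolding grid_def using assms enum_closed
    by (simp only: prod.case) (metis grid_point_add_left direction_closed minus_closed)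
qed

lemma grid_column:
  assumes "Suc (2 * t) \<le> q" "a < q" "b < q" "b' < q"
  shows "grid t (a, b') = line_point (grid t (a, b)) (direction (Suc (2 * t))) (e b' \<ominus> e b)"
proof -
  have "e b' = e b \<oplus> (e b' \<ominus> e b)"
    using assms enum_closed by algebra
  then show ?thesis
    unfolding grid_def using assms enum_closed
    by (simp only: prod.case) (metis grid_point_add_right direction_closed minus_closed)
qed


lemma grid_edge_along:
  assumes "Suc (2 * t) \<le> q" "T \<in> edges (rook_graph q)"
  shows "\<exists>P\<in>carrier R \<times> carrier R. \<exists>Q\<in>carrier R \<times> carrier R.
    P \<noteq> Q \<and> grid t ` T = {P, Q} \<and> (along (2 * t) P Q \<or> along (Suc (2 * t)) P Q)"
proof -
  have inj: "inj_on (grid t) ({0..<q} \<times> {0..<q})"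
    using grid_bij[OF assms(1)] by (simp add: bij_betw_def)
  have into: "grid t (a, b) \<in> carrier R \<times> carrier R" if "a < q" "b < q" for a b
    using bij_betw_apply[OF grid_bij[OF assms(1)]] that by simp
  from assms(2) consider E b where "E \<in> edges (complete_graph q)" "b < q" "T = E \<times> {b}"
    | a E where "a < q" "E \<in> edges (complete_graph q)" "T = {a} \<times> E"
    unfolding edges_cart_prod[OF simple_graph_complete_graph simple_graph_complete_graph] by auto
  then show ?thesis
  proof cases
    case (1 E b)
    then obtain a a' where a: "a < q" "a' < q" "a \<noteq> a'" "E = {a, a'}"
      unfolding complete_graph_eq_complete_graph_on edges_complete_graph_on by auto
    have "grid t (a, b) \<noteq> grid t (a', b)"
      using inj_onD[OF inj] a 1(2) by fastforce
    moreover have "along (2 * t) (grid t (a, b)) (grid t (a', b))"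
      unfolding along_def using grid_row[OF assms(1) a(1,2) 1(2)] enum_closed a by blast
    moreover have "grid t ` T = {grid t (a, b), grid t (a', b)}"
      using 1(3) a(4) by simp
    ultimately show ?thesis
      using into a 1(2) by blast
  next
    case (2 a E)
    then obtain b b' where b: "b < q" "b' < q" "b \<noteq> b'" "E = {b, b'}"
      unfolding complete_graph_eq_complete_graph_on edges_complete_graph_on by auto
    have "grid t (a, b) \<noteq> grid t (a, b')"
      using inj_onD[OF inj] b 2(1) by fastforce
    moreover have "along (Suc (2 * t)) (grid t (a, b)) (grid t (a, b'))"
      unfolding along_def using grid_column[OF assms(1) 2(1) b(1,2)] enum_closed b by blast
    moreover have "grid t ` T = {grid t (a, b), grid t (a, b')}"
      using 2(3) b(4) by simp
    ultimately show ?thesis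
      using into b 2(1) by blast
  qed
qed

lemma along_grid_edge:
  assumes "Suc (2 * t) \<le> q" "P \<in> carrier R \<times> carrier R" "P \<noteq> Q"
    and "along (2 * t) P Q \<or> along (Suc (2 * t)) P Q"
  shows "\<exists>T\<in>edges (rook_graph q). grid t ` T = {P, Q}"
proof -
  have "P \<in> grid t ` ({0..<q} \<times> {0..<q})"
    using grid_bij[OF assms(1)] assms(2) by (simp add: bij_betw_def)
  then obtain a b where ab: "a < q" "b < q" "P = grid t (a, b)"
    by auto
  have enum_shift: "\<exists>x'<q. e x' = e x \<oplus> c \<and> e x' \<ominus> e x = c" if "x < q" "c \<in> carrier R" for x c
  proof -
    have "e x \<oplus> c \<in> e ` {0..<q}"
      using enum enum_closed[OF that(1)] that(2) by (simp add: bij_betw_def)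
    moreover have "(e x \<oplus> c) \<ominus> e x = c"
      using enum_closed[OF that(1)] that(2) by algebra
    ultimately show ?thesis
      by auto
  qed
  have edges_K: "{x, x'} \<in> edges (complete_graph q)" if "x < q" "x' < q" "x \<noteq> x'" for x x'
    using that unfolding complete_graph_eq_complete_graph_on edges_complete_graph_on by auto
  from assms(4) show ?thesis
  proof
    assume "along (2 * t) P Q"
    then obtain c where c: "c \<in> carrier R" "Q = line_point P (direction (2 * t)) c"
      unfolding along_def by blast
    then obtain a' where a': "a' < q" "e a' \<ominus> e a = c"
      using enum_shift[OF ab(1)] by blast
    then have "Q = grid t (a', b)"
      using grid_row[OF assms(1) ab(1) a'(1) ab(2)] ab(3) c(2) by simp
    then have "a \<noteq> a'" "grid t ` ({a, a'} \<times> {b}) = {P, Q}"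
      using assms(3) ab(3) by auto
    moreover have "{a, a'} \<times> {b} \<in> edges (rook_graph q)"
      using edges_K[OF ab(1) a'(1) calculation(1)] ab(2)
      unfolding edges_cart_prod[OF simple_graph_complete_graph simple_graph_complete_graph] by auto
    ultimately show ?thesis
      by blast
  next
    assume "along (Suc (2 * t)) P Q"
    then obtain c where c: "c \<in> carrier R" "Q = line_point P (direction (Suc (2 * t))) c"
      unfolding along_def by blast
    then obtain b' where b': "b' < q" "e b' \<ominus> e b = c"
      using enum_shift[OF ab(2)] by blast
    then have "Q = grid t (a, b')"
      using grid_column[OF assms(1) ab(1) ab(2) b'(1)] ab(3) c(2) by simp
    then have "b \<noteq> b'" "grid t ` ({a} \<times> {b, b'}) = {P, Q}"
      using assms(3) ab(3) by auto
    moreover have "{a} \<times> {b, b'} \<in> edges (rook_graph q)"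
      using edges_K[OF ab(2) b'(1) calculation(1)] ab(1)
      unfolding edges_cart_prod[OF simple_graph_complete_graph simple_graph_complete_graph] by auto
    ultimately show ?thesis
      by blast
  qed
qed


lemma edge_partition_into_rook_graph:
  assumes "odd q"
  shows "edge_partition_into (complete_graph_on (carrier R \<times> carrier R)) (rook_graph q) ((q + 1) div 2)"
proof -
  define C where "C t = (\<lambda>T. grid t ` T) ` edges (rook_graph q)" for t
  have bound: "Suc (2 * t) \<le> q" if "t < (q + 1) div 2" for t
    using that by linarith
  show ?thesis
  proof (rule edge_partition_intoI[where C = C])
    fix t assume t: "t < (q + 1) div 2"
    show "is_copy (rook_graph q) (complete_graph_on (carrier R \<times> carrier R)) (C t)"
      unfolding is_copy_def C_def using grid_bij[OF bound[OF t]]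
      by (intro exI[of _ "grid t"]) (simp add: bij_betw_def)
    show "C t \<subseteq> edges (complete_graph_on (carrier R \<times> carrier R))"
    proof
      fix E assume "E \<in> C t"
      then obtain T where "T \<in> edges (rook_graph q)" "E = grid t ` T"
        unfolding C_def by blast
      then show "E \<in> edges (complete_graph_on (carrier R \<times> carrier R))"
        using grid_edge_along[OF bound[OF t]] unfolding edges_complete_graph_on by blast
    qed
  next
    fix E assume "E \<in> edges (complete_graph_on (carrier R \<times> carrier R))"
    then obtain P Q where PQ: "P \<in> carrier R \<times> carrier R" "Q \<in> carrier R \<times> carrier R" "P \<noteq> Q" "E = {P, Q}"
      unfolding edges_complete_graph_on by blast
    obtain r where r: "r \<le> q" "along r P Q"
      using along_exists[OF PQ(1,2)] by blast
    define t where "t = r div 2"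
    have r_t: "r = 2 * t \<or> r = Suc (2 * t)"
      unfolding t_def by presburger
    have t: "t < (q + 1) div 2"
      using r(1) assms unfolding t_def by presburger
    show "\<exists>!t. t < (q + 1) div 2 \<and> E \<in> C t"
    proof (rule ex1I[of _ t])
      obtain T where "T \<in> edges (rook_graph q)" "grid t ` T = E"
        using along_grid_edge[OF bound[OF t] PQ(1,3)] r(2) r_t PQ(4) by blast
      then show "t < (q + 1) div 2 \<and> E \<in> C t"
        unfolding C_def using t by blast
    next
      fix t' assume t': "t' < (q + 1) div 2 \<and> E \<in> C t'"
      then obtain T where "T \<in> edges (rook_graph q)" "E = grid t' ` T"
        unfolding C_def by blast
      then obtain P' Q' where P'Q': "P' \<in> carrier R \<times> carrier R" "Q' \<in> carrier R \<times> carrier R"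
        "{P', Q'} = {P, Q}" "along (2 * t') P' Q' \<or> along (Suc (2 * t')) P' Q'"
        using grid_edge_along[OF bound] t' PQ(4) by metis
      then obtain s where "s = 2 * t' \<or> s = Suc (2 * t')" "along s P' Q'"
        by blast
      then have s: "s div 2 = t'" "s \<le> q" "along s P' Q'"
        using bound[of t'] t' by auto
      have "along s P Q"
        using s(3) P'Q'(1-3) along_sym by (auto simp: doubleton_eq_iff)
      then have "s = r"
        using along_unique[OF PQ(1,3) s(2) r(1)] r(2) by blast
      then show "t' = t"
        using s(1) t_def by simp
    qed
  qed
qed


theorem edge_partition_into_torus:
  assumes "odd q"
  shows "edge_partition_into (complete_graph (q ^ 2))
           (cart_prod (cycle_graph q) (cycle_graph q)) ((q ^ 2 - 1) div 4)"
proof -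
  obtain m where q: "q = 2 * m + 1"
    using assms oddE by blast
  have "card {\<zero>, \<one>} \<le> card (carrier R)"
    using finite_carrier by (intro card_mono) simp_all
  then have "2 \<le> q"
    using card_carrier by (simp add: eq_commute[of \<zero>])
  then have m: "0 < m"
    using q by simp
  have "finite (carrier R \<times> carrier R)" "card (carrier R \<times> carrier R) = q ^ 2"
    using finite_carrier card_carrier by (simp_all add: card_cartesian_product power2_eq_square)
  then obtain enc where "bij_betw enc (carrier R \<times> carrier R) {0..<q ^ 2}"
    using ex_bij_betw_finite_nat by metis
  then have "edge_partition_into (complete_graph (q ^ 2)) (complete_graph_on (carrier R \<times> carrier R)) 1"
    unfolding complete_graph_eq_complete_graph_on by (rule edge_partition_into_bij)
  moreover have "edge_partition_into (complete_graph_on (carrier R \<times> carrier R)) (rook_graph q) (m + 1)"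
    using edge_partition_into_rook_graph[OF assms] q by simp
  moreover have "edge_partition_into (rook_graph q) (cart_prod (cycle_graph q) (cycle_graph q)) m"
  proof -
    have "simple_graph (cycle_graph q)"
      using m q by (intro simple_graph_cycle_graph) simp
    then show ?thesis
      using complete_graph_hamiltonian_decomposition[OF m] q
      by (intro edge_partition_into_cart_prod) (simp_all add: simple_graph_complete_graph)
  qed
  ultimately have "edge_partition_into (complete_graph (q ^ 2)) (cart_prod (cycle_graph q) (cycle_graph q))
      (1 * ((m + 1) * m))"
    by (meson edge_partition_into_trans simple_graph_cart_prod simple_graph_complete_graph
        simple_graph_complete_graph_on)
  moreover have "(q ^ 2 - 1) div 4 = 1 * ((m + 1) * m)"
    unfolding q by (simp add: power2_eq_square algebra_simps)
  ultimately show ?thesis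
    by simp
qed

end

theorem theorem2:
  fixes p :: nat
  assumes "prime p" and "odd p"
  shows "edge_partition_into (complete_graph (p ^ 4))
           (cart_prod (cycle_graph (p ^ 2)) (cycle_graph (p ^ 2))) ((p ^ 4 - 1) div 4)"
proof -
  obtain R :: "(int \<times> int) ring" where R: "field R" "finite (carrier R)" "card (carrier R) = p ^ 2"
    using exists_field_card_prime_square[OF assms] by blast
  then obtain e where "bij_betw e {0..<p ^ 2} (carrier R)"
    using ex_bij_betw_nat_finite by metis
  then interpret enumerated_field R "p ^ 2" e
    using R(1) by (intro enumerated_field.intro enumerated_field_axioms.intro)
  have "p ^ 4 = (p ^ 2) ^ 2"
    by simp
  then show ?thesis
    using edge_partition_into_torus assms(2) by simp
qed

end
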